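(* Consider the parallel-links routing game described in the context in which all users have equal demands $r^i=R/N$ for every $i$, and the costs are $J^i(\mathbf f)=\sum_l f^i_lT_l(f_l)$ with each $T_l:[0,\infty)\to[0,\infty)$ strictly increasing, convex and continuously differentiable. Then: (1) there is at most one cost vector $\tilde{\mathbf g}\in\mathcal G$ satisfying both Pareto optimality (N2) and Symmetry (N3); (2) $PoS=1$; moreover the NBS cost vector is the cost vector of a single feasible routing profile whose link totals are system-optimal (so the NBS outcome is socially optimal with probability $1$).
   Context: Parallel-links routing game: users $\mathcal N=\{1,\dots,N\}$ share parallel links $\mathcal L=\{1,\dots,L\}$ from a common source to a common destination. User $i$ has demand $r^i>0$, $R=\sum_ir^i$. A routing strategy of user $i$ is $\mathbf f^i=(f^i_l)_{l}$ with $f^i_l\ge0$, $\sum_lf^i_l=r^i$; feasible profiles $\mathbf f=(\mathbf f^1,\dots,\mathbf f^N)$ form the set $\mathbf F$; $f_l=\sum_if^i_l$. NEP: a feasible $\hat{\mathbf f}$ such that each $\hat{\mathbf f}^i$ minimizes $J^i$ over user $i$'s feasible strategies given the others'; it exists and is unique. $\hat J^i=J^i(\hat{\mathbf f})$. Social cost $J_{sys}(\mathbf f)=\sum_iJ^i(\mathbf f)=\sum_lf_lT_l(f_l)$; $J^*_{sys}$ its minimum over $\mathbf F$, attained at system-optimal link flows $(f^*_l)$. Bargaining: $\mathcal G$ is the set of all vectors $\sum_{m=1}^Mp_m(J^1(\mathbf f(m)),\dots,J^N(\mathbf f(m)))$ with $M$ finite, $p_m>0$, $\sum_mp_m=1$,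 $\mathbf f(m)\in\mathbf F$. Axiom N2 (Pareto optimality) for $\tilde{\mathbf g}\in\mathcal G$: there is no $\mathbf g\in\mathcal G$ with $g^i\le\tilde g^i$ for all $i$ and $g^i<\tilde g^i$ for some $i$. Axiom N3 (Symmetry): for any users $i,k$, if $\hat J^i=\hat J^k$ and $\mathcal G$ is invariant under swapping coordinates $i$ and $k$, then $\tilde g^i=\tilde g^k$. The NBS is the unique $\tilde{\mathbf g}$ maximizing $\prod_i(\hat J^i-g^i)$ over $\mathbf g\in\mathcal G$ with $g^i\le\hat J^i$ for all $i$. $PoS=(\sum_i\tilde g^i)/J^*_{sys}$. *)

theory Defs
  imports "HOL-Analysis.Analysis"
begin

definition strategies :: "nat \<Rightarrow> real \<Rightarrow> (nat \<Rightarrow> real) set" where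
  "strategies L d = {s. (\<forall>l\<in>{1..L}. 0 \<le> s l) \<and> (\<Sum>l\<in>{1..L}. s l) = d}"

definition feasible :: "nat \<Rightarrow> nat \<Rightarrow> (nat \<Rightarrow> real) \<Rightarrow> (nat \<Rightarrow> nat \<Rightarrow> real) set" where
  "feasible N L r = {f. \<forall>i\<in>{1..N}. f i \<in> strategies L (r i)}"

definition link_flow :: "nat \<Rightarrow> (nat \<Rightarrow> nat \<Rightarrow> real) \<Rightarrow> nat \<Rightarrow> real" where
  "link_flow N f l = (\<Sum>i\<in>{1..N}. f i l)"

definition cost :: "nat \<Rightarrow> nat \<Rightarrow> (nat \<Rightarrow> real \<Rightarrow> real) \<Rightarrow> nat \<Rightarrow> (nat \<Rightarrow> nat \<Rightarrow> real) \<Rightarrow> real" where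
  "cost N L T i f = (\<Sum>l\<in>{1..L}. f i l * T l (link_flow N f l))"

definition cost_vec :: "nat \<Rightarrow> nat \<Rightarrow> (nat \<Rightarrow> real \<Rightarrow> real) \<Rightarrow> (nat \<Rightarrow> nat \<Rightarrow> real) \<Rightarrow> (nat \<Rightarrow> real)" where
  "cost_vec N L T f = (\<lambda>i. if i \<in> {1..N} then cost N L T i f else 0)"

definition J_sys :: "nat \<Rightarrow> nat \<Rightarrow> (nat \<Rightarrow> real \<Rightarrow> real) \<Rightarrow> (nat \<Rightarrow> nat \<Rightarrow> real) \<Rightarrow> real" where
  "J_sys N L T f = (\<Sum>i\<in>{1..N}. cost N L T i f)"

definition J_sys_opt :: "nat \<Rightarrow> nat \<Rightarrow> (nat \<Rightarrow> real \<Rightarrow> real) \<Rightarrow> (nat \<Rightarrow> real) \<Rightarrow> real" where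
  "J_sys_opt N L T r = (INF f\<in>feasible N L r. J_sys N L T f)"

definition is_NEP :: "nat \<Rightarrow> nat \<Rightarrow> (nat \<Rightarrow> real \<Rightarrow> real) \<Rightarrow> (nat \<Rightarrow> real) \<Rightarrow> (nat \<Rightarrow> nat \<Rightarrow> real) \<Rightarrow> bool" where
  "is_NEP N L T r fh \<longleftrightarrow> fh \<in> feasible N L r \<and>
     (\<forall>i\<in>{1..N}. \<forall>s\<in>strategies L (r i). cost N L T i fh \<le> cost N L T i (fh(i := s)))"

text \<open>The set G of achievable (randomized) cost vectors; coordinates outside 1..N are 0.\<close>
definition cost_set :: "nat \<Rightarrow> nat \<Rightarrow> (nat \<Rightarrow> real \<Rightarrow> real) \<Rightarrow> (nat \<Rightarrow> real) \<Rightarrow> (nat \<Rightarrow> real) set" where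
  "cost_set N L T r = {g. \<exists>(M::nat) (p::nat \<Rightarrow> real) (fs::nat \<Rightarrow> nat \<Rightarrow> nat \<Rightarrow> real).
      (\<forall>m<M. 0 < p m) \<and> (\<Sum>m<M. p m) = 1 \<and> (\<forall>m<M. fs m \<in> feasible N L r) \<and>
      g = (\<lambda>i. if i \<in> {1..N} then (\<Sum>m<M. p m * cost N L T i (fs m)) else 0)}"

definition pareto_opt :: "nat \<Rightarrow> (nat \<Rightarrow> real) set \<Rightarrow> (nat \<Rightarrow> real) \<Rightarrow> bool" where
  "pareto_opt N G gt \<longleftrightarrow>
     \<not> (\<exists>g\<in>G. (\<forall>i\<in>{1..N}. g i \<le> gt i) \<and> (\<exists>i\<in>{1..N}. g i < gt i))"

definition swap_coords :: "nat \<Rightarrow> nat \<Rightarrow> (nat \<Rightarrow> real) \<Rightarrow> (nat \<Rightarrow> real)" where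
  "swap_coords i k g = (\<lambda>j. if j = i then g k else if j = k then g i else g j)"

definition symmetric_N3 :: "nat \<Rightarrow> (nat \<Rightarrow> real) set \<Rightarrow> (nat \<Rightarrow> real) \<Rightarrow> (nat \<Rightarrow> real) \<Rightarrow> bool" where
  "symmetric_N3 N G hatJ gt \<longleftrightarrow>
     (\<forall>i\<in>{1..N}. \<forall>k\<in>{1..N}. hatJ i = hatJ k \<and> swap_coords i k ` G = G \<longrightarrow> gt i = gt k)"

definition is_NBS :: "nat \<Rightarrow> (nat \<Rightarrow> real) set \<Rightarrow> (nat \<Rightarrow> real) \<Rightarrow> (nat \<Rightarrow> real) \<Rightarrow> bool" where
  "is_NBS N G hatJ gt \<longleftrightarrow> gt \<in> G \<and> (\<forall>i\<in>{1..N}. gt i \<le> hatJ i) \<and>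
     (\<forall>g\<in>G. (\<forall>i\<in>{1..N}. g i \<le> hatJ i) \<longrightarrow>
        (\<Prod>i\<in>{1..N}. hatJ i - g i) \<le> (\<Prod>i\<in>{1..N}. hatJ i - gt i))"

end

theory Submission
  imports Defs
begin

text \<open>At a Nash equilibrium all users route identically: the first-order conditions compare
  the marginal costs \<open>T l (f l) + f i l * T' l (f l)\<close>, which are strictly increasing in the
  user's own flow, so equal demands force equal flows and hence a common equilibrium cost.
  Every achievable cost vector has coordinate sum at least the optimal social cost \<open>J\<^sup>*\<close>, and
  splitting a system-optimal link flow equally among the users realises the vector with all
  coordinates \<open>J\<^sup>* / N\<close>. Symmetry and Pareto optimality single out this vector; and since the
  gaps between equilibrium and bargained costs sum to at most \<open>N\<close> times the gap of this vector,
  AM-GM shows that the Nash product is maximal there and nowhere else.\<close>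

lemma has_real_derivative_nonneg_at_right_min:
  fixes h :: "real \<Rightarrow> real"
  assumes deriv: "(h has_real_derivative D) (at x within {x..x+e})" and e: "e > 0"
    and min: "\<And>y. y \<in> {x..x+e} \<Longrightarrow> h x \<le> h y"
  shows "D \<ge> 0"
proof -
  have "((\<lambda>y. (h y - h x) / (y - x)) \<longlongrightarrow> D) (at_right x)"
    using deriv e by (simp add: has_field_derivative_iff at_within_Icc_at_right)
  moreover have "eventually (\<lambda>y. y \<in> {x<..<x+e}) (at_right x)"
    using eventually_at_right_real[of x "x+e"] e by simp
  then have "eventually (\<lambda>y. (h y - h x) / (y - x) \<ge> 0) (at_right x)"
    by eventually_elim (use min in auto)
  ultimately show ?thesis
    by (simp add: tendsto_lowerbound)
qed

lemma strict_mono_on_has_real_derivative_nonneg: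
  fixes T :: "real \<Rightarrow> real"
  assumes deriv: "(T has_real_derivative D) (at x within {0..})" and x: "x \<ge> 0"
    and mono: "strict_mono_on {0..} T"
  shows "D \<ge> 0"
proof (rule has_real_derivative_nonneg_at_right_min)
  show "(T has_real_derivative D) (at x within {x..x+1})"
    using has_field_derivative_subset[OF deriv] x by auto
  show "T x \<le> T y" if "y \<in> {x..x+1}" for y
    using that x strict_mono_onD[OF mono, of x y] by (cases "y = x") auto
qed simp

lemma strict_mono_convex_on_has_real_derivative_pos:
  fixes T :: "real \<Rightarrow> real"
  assumes deriv: "(T has_real_derivative D) (at x within {0..})" and x: "x > 0"
    and mono: "strict_mono_on {0..} T" and convex: "convex_on {0..} T"
  shows "D > 0"
proof -
  have "T 0 - T x \<ge> D * (0 - x)"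
    by (rule convex_on_imp_above_tangent[OF convex]) (use deriv x in \<open>auto simp: is_interval_connected\<close>)
  moreover have "T 0 < T x"
    using mono x by (auto intro: strict_mono_onD)
  ultimately have "D * x > 0"
    by simp
  then show ?thesis
    using x by (simp add: zero_less_mult_iff)
qed

lemma prod_le_mean_power:
  fixes y :: "'a \<Rightarrow> real"
  assumes "finite S" and "S \<noteq> {}" and nonneg: "\<And>i. i \<in> S \<Longrightarrow> y i \<ge> 0"
  shows "(\<Prod>i\<in>S. y i) \<le> ((\<Sum>i\<in>S. y i) / card S) ^ card S"
proof -
  let ?n = "card S" and ?P = "\<Prod>i\<in>S. y i"
  have n: "?n > 0"
    using assms by (simp add: card_gt_0_iff)
  have "?P \<ge> 0"
    using nonneg by (simp add: prod_nonneg)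
  then have "?P = (?P powr (1 / ?n)) ^ ?n"
    using n by (cases "?P = 0") (simp_all add: powr_powr flip: powr_realpow)
  also have "\<dots> \<le> ((\<Sum>i\<in>S. y i) / ?n) ^ ?n"
    using arith_geom_mean[OF assms] by (intro power_mono) (simp_all add: sum_divide_distrib)
  finally show ?thesis .
qed

text \<open>If some \<open>y j \<noteq> m\<close>, the midpoints \<open>z i = (y i + m) / 2\<close>
  satisfy \<open>y i * m \<le> z i ^ 2\<close>, strictly at \<open>j\<close>, which contradicts AM-GM for \<open>z\<close>.\<close>

lemma all_eq_if_prod_ge_mean_power:
  fixes y :: "'a \<Rightarrow> real" and m :: real
  assumes fin: "finite S" and ne: "S \<noteq> {}" and nonneg: "\<And>i. i \<in> S \<Longrightarrow> y i \<ge> 0"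
    and sum: "(\<Sum>i\<in>S. y i) \<le> card S * m" and prod: "(\<Prod>i\<in>S. y i) \<ge> m ^ card S"
    and m: "m \<ge> 0"
  shows "\<forall>i\<in>S. y i = m"
proof (cases "m = 0")
  case True
  then show ?thesis
    using sum nonneg fin sum_nonneg_eq_0_iff[of S y] sum_nonneg[of S y] by auto
next
  case False
  with m have m: "m > 0"
    by simp
  let ?n = "card S"
  define z where "z i = (y i + m) / 2" for i
  show ?thesis
  proof (rule ccontr)
    assume "\<not> ?thesis"
    then obtain j where j: "j \<in> S" and "y j \<noteq> m" by auto
    have z_sq_diff: "z i ^ 2 - y i * m = ((y i - m) / 2) ^ 2" for i
      unfolding z_def by (simp add: power2_eq_square field_simps)
    then have z_sq: "y i * m \<le> z i ^ 2" for i
      by (metis diff_ge_0_iff_ge zero_le_power2)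
    have "((y j - m) / 2) ^ 2 > 0"
      using \<open>y j \<noteq> m\<close> by simp
    then have strict: "y j * m < z j ^ 2"
      using z_sq_diff[of j] by linarith
    have "(\<Prod>i\<in>S. y i) * m ^ ?n = (\<Prod>i\<in>S. y i * m)"
      by (simp add: prod.distrib)
    also have "\<dots> < (\<Prod>i\<in>S. z i ^ 2)"
      by (rule prod_mono_strict[where f = "\<lambda>i. y i * m" and g = "\<lambda>i. z i ^ 2", OF j strict fin])
        (use nonneg m z_sq in \<open>auto simp: z_def add_nonneg_eq_0_iff\<close>)
    also have "\<dots> = (\<Prod>i\<in>S. z i) ^ 2"
      by (simp add: prod_power_distrib)
    also have "\<dots> \<le> (m ^ ?n) ^ 2"
    proof (rule power_mono)
      have "(\<Sum>i\<in>S. z i) = ((\<Sum>i\<in>S. y i) + ?n * m) / 2"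
        unfolding z_def by (simp add: sum_divide_distrib[symmetric] sum.distrib)
      then have "(\<Sum>i\<in>S. z i) / ?n \<le> m"
        using sum fin ne by (simp add: field_simps card_gt_0_iff)
      then have "((\<Sum>i\<in>S. z i) / ?n) ^ ?n \<le> m ^ ?n"
        using nonneg m by (intro power_mono) (auto simp: z_def intro!: sum_nonneg divide_nonneg_nonneg)
      then show "(\<Prod>i\<in>S. z i) \<le> m ^ ?n"
        using prod_le_mean_power[OF fin ne, of z] nonneg m by (auto simp: z_def)
      show "0 \<le> (\<Prod>i\<in>S. z i)"
        using nonneg m by (auto simp: z_def intro!: prod_nonneg)
    qed
    finally show False
      using prod m by (simp add: power2_eq_square mult_right_mono)
  qed
qed

definition link_cost :: "nat \<Rightarrow> (nat \<Rightarrow> real \<Rightarrow> real) \<Rightarrow> (nat \<Rightarrow> real) \<Rightarrow> real" where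
  "link_cost L T x = (\<Sum>l\<in>{1..L}. x l * T l (x l))"

definition equal_split :: "nat \<Rightarrow> (nat \<Rightarrow> real) \<Rightarrow> nat \<Rightarrow> nat \<Rightarrow> real" where
  "equal_split N x = (\<lambda>i l. x l / real N)"

lemma feasible_nonneg: "f \<in> feasible N L r \<Longrightarrow> i \<in> {1..N} \<Longrightarrow> l \<in> {1..L} \<Longrightarrow> 0 \<le> f i l"
  unfolding feasible_def strategies_def by auto

lemma feasible_sum: "f \<in> feasible N L r \<Longrightarrow> i \<in> {1..N} \<Longrightarrow> (\<Sum>l\<in>{1..L}. f i l) = r i"
  unfolding feasible_def strategies_def by auto

lemma link_flow_nonneg: "f \<in> feasible N L r \<Longrightarrow> l \<in> {1..L} \<Longrightarrow> 0 \<le> link_flow N f l"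
  unfolding link_flow_def by (rule sum_nonneg) (rule feasible_nonneg)

lemma link_flow_ge: "f \<in> feasible N L r \<Longrightarrow> i \<in> {1..N} \<Longrightarrow> l \<in> {1..L} \<Longrightarrow> f i l \<le> link_flow N f l"
  unfolding link_flow_def by (rule member_le_sum) (auto intro: feasible_nonneg)

lemma link_flow_fun_upd:
  "i \<in> {1..N} \<Longrightarrow> link_flow N (f(i := s)) l = link_flow N f l - f i l + s l"
  unfolding link_flow_def by (subst (1 2) sum.remove[of "{1..N}" i]) auto

lemma link_flow_in_strategies:
  assumes "f \<in> feasible N L r"
  shows "link_flow N f \<in> strategies L (\<Sum>i\<in>{1..N}. r i)"
proof -
  have "(\<Sum>l\<in>{1..L}. link_flow N f l) = (\<Sum>i\<in>{1..N}. \<Sum>l\<in>{1..L}. f i l)"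
    unfolding link_flow_def by (rule sum.swap)
  also have "\<dots> = (\<Sum>i\<in>{1..N}. r i)"
    using assms feasible_sum by (intro sum.cong) auto
  finally show ?thesis
    using assms link_flow_nonneg unfolding strategies_def by blast
qed

lemma J_sys_eq_link_cost: "J_sys N L T f = link_cost L T (link_flow N f)"
  unfolding J_sys_def cost_def link_cost_def
  by (subst sum.swap) (simp add: link_flow_def sum_distrib_right)

lemma link_flow_equal_split: "N \<ge> 1 \<Longrightarrow> link_flow N (equal_split N x) = x"
  unfolding link_flow_def equal_split_def by auto

lemma cost_equal_split: "N \<ge> 1 \<Longrightarrow> cost N L T i (equal_split N x) = link_cost L T x / N"
  unfolding cost_def link_flow_equal_split link_cost_def
  by (simp add: equal_split_def sum_divide_distrib)

lemma equal_split_feasible: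
  assumes "\<forall>i\<in>{1..N}. r i = R / N" and "x \<in> strategies L R"
  shows "equal_split N x \<in> feasible N L r"
  using assms unfolding feasible_def strategies_def equal_split_def
  by (simp add: sum_divide_distrib[symmetric])

text \<open>\<open>strategies L R\<close> leaves the coordinates outside \<open>{1..L}\<close> free and so is not compact;
  cutting them off to \<open>0\<close> changes no link cost.\<close>

lemma compact_strategies_supported:
  "compact {x \<in> strategies L R. \<forall>l. l \<notin> {1..L} \<longrightarrow> x l = 0}"
proof -
  define box where "box l = (if l \<in> {1..L} then {0..R} else {0})" for l
  have "compact (PiE UNIV box)"
    using compactin_PiE[of "\<lambda>_. euclidean" UNIV box]
    by (simp add: box_def euclidean_product_topology)
  moreover have "closed {x :: nat \<Rightarrow> real. (\<Sum>l\<in>{1..L}. x l) = R}"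
    by (intro closed_Collect_eq continuous_on_sum continuous_on_product_coordinates) auto
  ultimately have "compact (PiE UNIV box \<inter> {x. (\<Sum>l\<in>{1..L}. x l) = R})"
    by (rule compact_Int_closed)
  moreover have "PiE UNIV box \<inter> {x. (\<Sum>l\<in>{1..L}. x l) = R}
      = {x \<in> strategies L R. \<forall>l. l \<notin> {1..L} \<longrightarrow> x l = 0}"
  proof -
    have "x l \<le> R" if "x \<in> strategies L R" "l \<in> {1..L}" for x l
      using that member_le_sum[of l "{1..L}" x] unfolding strategies_def by auto
    then show ?thesis
      unfolding box_def strategies_def PiE_UNIV_domain by (auto split: if_splits)
  qed
  ultimately show ?thesis
    by simp
qed

lemma exists_link_cost_minimum:
  assumes L: "L \<ge> 1" and R: "R \<ge> 0"
    and T_cont: "\<And>l. l \<in> {1..L} \<Longrightarrow> continuous_on {0..} (T l)"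
  shows "\<exists>x\<in>strategies L R. \<forall>y\<in>strategies L R. link_cost L T x \<le> link_cost L T y"
proof -
  let ?K = "{x \<in> strategies L R. \<forall>l. l \<notin> {1..L} \<longrightarrow> x l = 0}"
  have "(\<lambda>l. if l = 1 then R else 0) \<in> ?K"
    using L R by (simp add: strategies_def)
  then have "?K \<noteq> {}"
    by blast
  moreover have "continuous_on ?K (link_cost L T)"
    unfolding link_cost_def
  proof (intro continuous_on_sum continuous_on_mult)
    fix l :: nat assume l: "l \<in> {1..L}"
    show coord: "continuous_on ?K (\<lambda>x. x l)"
      by (rule continuous_on_subset[OF continuous_on_product_coordinates]) auto
    have "(\<lambda>x. x l) ` ?K \<subseteq> {0..}"
      using l by (auto simp: strategies_def)
    then show "continuous_on ?K (\<lambda>x. T l (x l))"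
      by (rule continuous_on_compose2[OF T_cont[OF l] coord])
  qed
  ultimately obtain x where x: "x \<in> ?K" and min: "\<forall>y\<in>?K. link_cost L T x \<le> link_cost L T y"
    using continuous_attains_inf[OF compact_strategies_supported] by blast
  have "link_cost L T x \<le> link_cost L T y" if y: "y \<in> strategies L R" for y
  proof -
    define y' where "y' l = (if l \<in> {1..L} then y l else 0)" for l
    have agree: "\<And>l. l \<in> {1..L} \<Longrightarrow> y' l = y l"
      by (simp add: y'_def)
    then have "(\<Sum>l\<in>{1..L}. y' l) = (\<Sum>l\<in>{1..L}. y l)"
      by (intro sum.cong) auto
    then have "y' \<in> strategies L R"
      using y agree unfolding strategies_def by simp
    then have "y' \<in> ?K"
      by (simp add: y'_def)
    moreover have "link_cost L T y' = link_cost L T y"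
      unfolding link_cost_def using agree by (intro sum.cong) auto
    ultimately show ?thesis
      using min by (metis (no_types, lifting))
  qed
  with x show ?thesis
    by blast
qed

lemma cost_setE:
  assumes "g \<in> cost_set N L T r"
  obtains M :: nat and p :: "nat \<Rightarrow> real" and fs :: "nat \<Rightarrow> nat \<Rightarrow> nat \<Rightarrow> real"
  where "\<forall>m<M. 0 < p m" "(\<Sum>m<M. p m) = 1" "\<forall>m<M. fs m \<in> feasible N L r"
    "g = (\<lambda>i. if i \<in> {1..N} then (\<Sum>m<M. p m * cost N L T i (fs m)) else 0)"
  using assms unfolding cost_set_def mem_Collect_eq by (elim exE conjE) (rule that; assumption)

lemma cost_set_outside: "g \<in> cost_set N L T r \<Longrightarrow> i \<notin> {1..N} \<Longrightarrow> g i = 0"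
  by (erule cost_setE) auto

lemma cost_vec_in_cost_set: "f \<in> feasible N L r \<Longrightarrow> cost_vec N L T f \<in> cost_set N L T r"
  unfolding cost_set_def
  by (rule CollectI, rule exI[of _ "Suc 0"], rule exI[of _ "\<lambda>_. 1 :: real"], rule exI[of _ "\<lambda>_. f"])
    (auto simp: cost_vec_def)

lemma sum_cost_set_ge:
  assumes lower: "\<forall>f\<in>feasible N L r. c \<le> J_sys N L T f" and g: "g \<in> cost_set N L T r"
  shows "c \<le> (\<Sum>i\<in>{1..N}. g i)"
proof -
  obtain M :: nat and p fs where p: "\<forall>m<M. 0 < p m" "(\<Sum>m<M. p m) = 1" "\<forall>m<M. fs m \<in> feasible N L r"
    and g_eq: "g = (\<lambda>i. if i \<in> {1..N} then (\<Sum>m<M. p m * cost N L T i (fs m)) else 0)"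
    using g by (rule cost_setE)
  have "c = (\<Sum>m<M. p m * c)"
    using p(2) by (simp flip: sum_distrib_right)
  also have "\<dots> \<le> (\<Sum>m<M. p m * J_sys N L T (fs m))"
    using p(1,3) lower by (intro sum_mono mult_left_mono) (auto simp: less_imp_le)
  also have "\<dots> = (\<Sum>m<M. \<Sum>i\<in>{1..N}. p m * cost N L T i (fs m))"
    by (simp add: J_sys_def sum_distrib_left)
  also have "\<dots> = (\<Sum>i\<in>{1..N}. \<Sum>m<M. p m * cost N L T i (fs m))"
    by (rule sum.swap)
  also have "\<dots> = (\<Sum>i\<in>{1..N}. g i)"
    by (simp add: g_eq)
  finally show ?thesis .
qed

lemma link_flow_permute: "\<sigma> permutes {1..N} \<Longrightarrow> link_flow N (f \<circ> \<sigma>) = link_flow N f"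
  unfolding link_flow_def o_def by (intro ext sum.reindex_bij_betw permutes_imp_bij)

lemma cost_permute: "\<sigma> permutes {1..N} \<Longrightarrow> cost N L T j (f \<circ> \<sigma>) = cost N L T (\<sigma> j) f"
  unfolding cost_def by (simp add: link_flow_permute)

lemma feasible_permute:
  assumes "\<sigma> permutes {1..N}" and "\<forall>j\<in>{1..N}. r (\<sigma> j) = r j" and "f \<in> feasible N L r"
  shows "f \<circ> \<sigma> \<in> feasible N L r"
  unfolding feasible_def mem_Collect_eq
proof
  fix j :: nat assume j: "j \<in> {1..N}"
  then have "\<sigma> j \<in> {1..N}"
    using permutes_in_image[OF assms(1)] by blast
  then show "(f \<circ> \<sigma>) j \<in> strategies L (r j)"
    using assms(2,3) j unfolding feasible_def by force
qed

lemma cost_set_permute: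
  assumes \<sigma>: "\<sigma> permutes {1..N}" and r: "\<forall>j\<in>{1..N}. r (\<sigma> j) = r j"
    and g: "g \<in> cost_set N L T r"
  shows "g \<circ> \<sigma> \<in> cost_set N L T r"
proof -
  obtain M :: nat and p fs where p: "\<forall>m<M. 0 < p m" "(\<Sum>m<M. p m) = 1" "\<forall>m<M. fs m \<in> feasible N L r"
    and g_eq: "g = (\<lambda>i. if i \<in> {1..N} then (\<Sum>m<M. p m * cost N L T i (fs m)) else 0)"
    using g by (rule cost_setE)
  have "g \<circ> \<sigma> = (\<lambda>i. if i \<in> {1..N} then (\<Sum>m<M. p m * cost N L T i (fs m \<circ> \<sigma>)) else 0)"
  proof (rule ext)
    fix i :: nat
    show "(g \<circ> \<sigma>) i = (if i \<in> {1..N} then (\<Sum>m<M. p m * cost N L T i (fs m \<circ> \<sigma>)) else 0)"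
      using permutes_in_image[OF \<sigma>, of i] permutes_not_in[OF \<sigma>, of i]
      by (simp add: g_eq cost_permute[OF \<sigma>])
  qed
  moreover have "\<forall>m<M. fs m \<circ> \<sigma> \<in> feasible N L r"
    using p(3) feasible_permute[OF \<sigma> r] by blast
  ultimately show ?thesis
    using p(1,2) unfolding cost_set_def
    by (intro CollectI exI[of _ M] exI[of _ p] exI[of _ "\<lambda>m. fs m \<circ> \<sigma>"]) simp
qed

lemma swap_coords_cost_set:
  assumes i: "i \<in> {1..N}" and k: "k \<in> {1..N}" and r: "r i = r k"
  shows "swap_coords i k ` cost_set N L T r = cost_set N L T r"
proof -
  have swap: "swap_coords i k g = g \<circ> Transposition.transpose i k" for g
    by (auto simp: swap_coords_def Transposition.transpose_def)
  have sub: "swap_coords i k g \<in> cost_set N L T r" if "g \<in> cost_set N L T r" for g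
    unfolding swap using that i k r
    by (intro cost_set_permute permutes_swap_id) (auto simp: Transposition.transpose_def)
  have involutive: "swap_coords i k (swap_coords i k g) = g" for g
    by (simp add: swap comp_assoc)
  show ?thesis
  proof
    show "swap_coords i k ` cost_set N L T r \<subseteq> cost_set N L T r"
      using sub by blast
    show "cost_set N L T r \<subseteq> swap_coords i k ` cost_set N L T r"
    proof
      fix g assume "g \<in> cost_set N L T r"
      then show "g \<in> swap_coords i k ` cost_set N L T r"
        using sub involutive by (intro image_eqI[of _ _ "swap_coords i k g"]) auto
    qed
  qed
qed

definition unit_shift :: "nat \<Rightarrow> nat \<Rightarrow> nat \<Rightarrow> real" where
  "unit_shift a b l = (if l = b then 1 else if l = a then -1 else 0)"

lemma sum_unit_shift_mult:
  assumes "finite A" "a \<in> A" "b \<in> A" "a \<noteq> b"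
  shows "(\<Sum>l\<in>A. unit_shift a b l * X l) = X b - X a"
proof -
  have "unit_shift a b l * X l = (if l = b then X l else 0) - (if l = a then X l else 0)" for l
    using assms(4) by (simp add: unit_shift_def)
  then show ?thesis
    using assms by (simp add: sum_subtractf)
qed

locale routing_game =
  fixes N L :: nat and T :: "nat \<Rightarrow> real \<Rightarrow> real" and r :: "nat \<Rightarrow> real"
    and T' :: "nat \<Rightarrow> real \<Rightarrow> real"
  assumes T_incr: "\<And>l. l \<in> {1..L} \<Longrightarrow> strict_mono_on {0..} (T l)"
    and T_convex: "\<And>l. l \<in> {1..L} \<Longrightarrow> convex_on {0..} (T l)"
    and T_deriv: "\<And>l x. l \<in> {1..L} \<Longrightarrow> x \<ge> 0 \<Longrightarrow>
      (T l has_real_derivative T' l x) (at x within {0..})"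
begin

definition marginal_cost :: "(nat \<Rightarrow> nat \<Rightarrow> real) \<Rightarrow> nat \<Rightarrow> nat \<Rightarrow> real" where
  "marginal_cost f i l = T l (link_flow N f l) + f i l * T' l (link_flow N f l)"

lemma has_real_derivative_cost_shift:
  assumes f: "f \<in> feasible N L r" and i: "i \<in> {1..N}"
    and shift_nonneg: "\<And>\<epsilon> l. \<epsilon> \<in> {0..e} \<Longrightarrow> l \<in> {1..L} \<Longrightarrow> 0 \<le> link_flow N f l + \<epsilon> * c l"
  shows "((\<lambda>\<epsilon>. cost N L T i (f(i := \<lambda>l. f i l + \<epsilon> * c l))) has_real_derivative
           (\<Sum>l\<in>{1..L}. c l * marginal_cost f i l)) (at 0 within {0..e})"
proof -
  let ?F = "link_flow N f"
  have cost_eq: "(\<lambda>\<epsilon>. cost N L T i (f(i := \<lambda>l. f i l + \<epsilon> * c l)))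
      = (\<lambda>\<epsilon>. \<Sum>l\<in>{1..L}. (f i l + \<epsilon> * c l) * T l (?F l + \<epsilon> * c l))"
    unfolding cost_def link_flow_fun_upd[OF i] by simp
  have "((\<lambda>\<epsilon>. (f i l + \<epsilon> * c l) * T l (?F l + \<epsilon> * c l)) has_real_derivative
      c l * marginal_cost f i l) (at 0 within {0..e})" if l: "l \<in> {1..L}" for l
  proof -
    let ?g = "\<lambda>\<epsilon>. ?F l + \<epsilon> * c l"
    have "(T l has_real_derivative T' l (?F l)) (at (?g 0) within ?g ` {0..e})"
      by (simp, rule has_field_derivative_subset[OF T_deriv[OF l link_flow_nonneg[OF f l]]])
        (use shift_nonneg[OF _ l] in auto)
    moreover have "(?g has_real_derivative c l) (at 0 within {0..e})"
      by (auto intro!: derivative_eq_intros)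
    ultimately have "((\<lambda>\<epsilon>. T l (?F l + \<epsilon> * c l)) has_real_derivative T' l (?F l) * c l)
        (at 0 within {0..e})"
      using DERIV_image_chain by (fastforce simp: o_def)
    then show ?thesis
      by (auto intro!: derivative_eq_intros simp: marginal_cost_def algebra_simps)
  qed
  then show ?thesis
    unfolding cost_eq by (auto intro: DERIV_sum)
qed

text \<open>First-order condition: shifting \<open>\<epsilon> \<le> fh i a\<close> of user \<open>i\<close>'s flow from link \<open>a\<close> to link \<open>b\<close>
  is a feasible deviation, so the one-sided derivative of its cost at \<open>\<epsilon> = 0\<close> is nonnegative.\<close>

lemma NEP_marginal_cost_le:
  assumes NEP: "is_NEP N L T r fh" and i: "i \<in> {1..N}"
    and a: "a \<in> {1..L}" and b: "b \<in> {1..L}" and ab: "a \<noteq> b" and pos: "fh i a > 0"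
  shows "marginal_cost fh i a \<le> marginal_cost fh i b"
proof -
  have feas: "fh \<in> feasible N L r"
    using NEP unfolding is_NEP_def by blast
  define e where "e = fh i a"
  define deviation where "deviation \<epsilon> = (\<lambda>l. fh i l + \<epsilon> * unit_shift a b l)" for \<epsilon>
  have "deviation \<epsilon> \<in> strategies L (r i)" if "\<epsilon> \<in> {0..e}" for \<epsilon>
  proof -
    have "(\<Sum>l\<in>{1..L}. deviation \<epsilon> l) = r i"
      using sum_unit_shift_mult[of "{1..L}" a b "\<lambda>_. 1"] a b ab feasible_sum[OF feas i]
      by (simp add: deviation_def sum.distrib flip: sum_distrib_left)
    moreover have "0 \<le> deviation \<epsilon> l" if "l \<in> {1..L}" for l
      using feasible_nonneg[OF feas i that] \<open>\<epsilon> \<in> {0..e}\<close>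
      by (auto simp: deviation_def unit_shift_def e_def)
    ultimately show ?thesis
      unfolding strategies_def by blast
  qed
  then have min: "cost N L T i (fh(i := deviation 0)) \<le> cost N L T i (fh(i := deviation \<epsilon>))"
    if "\<epsilon> \<in> {0..0+e}" for \<epsilon>
    using NEP i that unfolding is_NEP_def by (simp add: deviation_def fun_upd_idem)
  have "((\<lambda>\<epsilon>. cost N L T i (fh(i := deviation \<epsilon>))) has_real_derivative
      (\<Sum>l\<in>{1..L}. unit_shift a b l * marginal_cost fh i l)) (at 0 within {0..0+e})"
    unfolding deviation_def
  proof (rule has_real_derivative_cost_shift[OF feas i])
    fix \<epsilon> l assume "\<epsilon> \<in> {0..0+e}" and l: "l \<in> {1..L}"
    then show "0 \<le> link_flow N fh l + \<epsilon> * unit_shift a b l"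
      using link_flow_nonneg[OF feas l] link_flow_ge[OF feas i a]
      by (auto simp: unit_shift_def e_def)
  qed
  from has_real_derivative_nonneg_at_right_min[OF this _ min]
  show ?thesis
    using pos a b ab by (simp add: e_def sum_unit_shift_mult)
qed

text \<open>If user \<open>i\<close> sent more than user \<open>k\<close> on link \<open>a\<close>, equal demands would force the reverse
  on some link \<open>b\<close>; as \<open>T' a > 0\<close> by convexity, the marginal costs of both users on \<open>a\<close> and
  \<open>b\<close> would then contradict their first-order conditions.\<close>

lemma NEP_flow_le:
  assumes NEP: "is_NEP N L T r fh" and i: "i \<in> {1..N}" and k: "k \<in> {1..N}"
    and r: "r i = r k" and a: "a \<in> {1..L}"
  shows "fh i a \<le> fh k a"
proof (rule ccontr)
  assume "\<not> fh i a \<le> fh k a"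
  then have less_a: "fh k a < fh i a"
    by simp
  have feas: "fh \<in> feasible N L r"
    using NEP unfolding is_NEP_def by blast
  have "\<exists>b\<in>{1..L}. fh i b < fh k b"
  proof (rule ccontr)
    assume "\<not> ?thesis"
    then have "(\<Sum>l\<in>{1..L}. fh k l) < (\<Sum>l\<in>{1..L}. fh i l)"
      using less_a a by (intro sum_strict_mono_ex1) (auto simp: not_less)
    then show False
      using feasible_sum[OF feas i] feasible_sum[OF feas k] r by simp
  qed
  then obtain b where b: "b \<in> {1..L}" and less_b: "fh i b < fh k b"
    by blast
  have ab: "a \<noteq> b"
    using less_a less_b by auto
  let ?F = "link_flow N fh"
  have "marginal_cost fh i a \<le> marginal_cost fh i b"
    using less_a feasible_nonneg[OF feas k a] by (intro NEP_marginal_cost_le[OF NEP i a b ab]) simp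
  moreover have "marginal_cost fh k b \<le> marginal_cost fh k a"
    using less_b feasible_nonneg[OF feas i b]
    by (intro NEP_marginal_cost_le[OF NEP k b a ab[symmetric]]) simp
  moreover have "T' a (?F a) > 0"
    using less_a feasible_nonneg[OF feas k a] link_flow_ge[OF feas i a]
    by (intro strict_mono_convex_on_has_real_derivative_pos
        [OF T_deriv[OF a] _ T_incr[OF a] T_convex[OF a]]) simp_all
  then have "fh k a * T' a (?F a) < fh i a * T' a (?F a)"
    using less_a by simp
  moreover have "T' b (?F b) \<ge> 0"
    using link_flow_nonneg[OF feas b]
    by (intro strict_mono_on_has_real_derivative_nonneg[OF T_deriv[OF b] _ T_incr[OF b]])
  then have "fh i b * T' b (?F b) \<le> fh k b * T' b (?F b)"
    using less_b by (simp add: mult_right_mono)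
  ultimately show False
    unfolding marginal_cost_def by linarith
qed

lemma NEP_cost_eq:
  assumes NEP: "is_NEP N L T r fh" and "i \<in> {1..N}" and "k \<in> {1..N}" and "r i = r k"
  shows "cost N L T i fh = cost N L T k fh"
proof -
  have "fh i l = fh k l" if "l \<in> {1..L}" for l
    using NEP_flow_le[OF NEP, of i k l] NEP_flow_le[OF NEP, of k i l] assms that by simp
  then show ?thesis
    unfolding cost_def by (intro sum.cong) simp_all
qed

end

lemma J_sys_opt_eq_minimum:
  assumes "f \<in> feasible N L r" and "\<forall>f'\<in>feasible N L r. J_sys N L T f \<le> J_sys N L T f'"
  shows "J_sys_opt N L T r = J_sys N L T f"
  unfolding J_sys_opt_def using assms by (intro cInf_eq_minimum) auto

lemma link_cost_pos:
  assumes "x \<in> strategies L R" and "R > 0"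
    and T_nonneg: "\<And>l. l \<in> {1..L} \<Longrightarrow> T l 0 \<ge> 0"
    and T_incr: "\<And>l. l \<in> {1..L} \<Longrightarrow> strict_mono_on {0..} (T l)"
  shows "link_cost L T x > 0"
proof -
  have x_nonneg: "\<And>l. l \<in> {1..L} \<Longrightarrow> x l \<ge> 0" and x_sum: "(\<Sum>l\<in>{1..L}. x l) = R"
    using assms(1) unfolding strategies_def by auto
  obtain l where l: "l \<in> {1..L}" and "x l > 0"
    using x_sum \<open>R > 0\<close> sum_nonpos[of "{1..L}" x] by (metis not_le)
  then have "x l * T l (x l) > 0"
    using T_nonneg[OF l] strict_mono_onD[OF T_incr[OF l], of 0 "x l"] by simp
  moreover have "x l' * T l' (x l') \<ge> 0" if l': "l' \<in> {1..L}" for l'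
  proof -
    have "T l' 0 \<le> T l' (x l')"
      using strict_mono_on_leD[OF T_incr[OF l']] x_nonneg[OF l'] by simp
    then show ?thesis
      using T_nonneg[OF l'] x_nonneg[OF l'] by simp
  qed
  ultimately show ?thesis
    unfolding link_cost_def using l by (intro sum_pos2) auto
qed

locale equal_demand_game = routing_game +
  assumes N_pos: "N \<ge> 1" and L_pos: "L \<ge> 1"
    and r_pos: "\<And>i. i \<in> {1..N} \<Longrightarrow> r i > 0"
    and r_equal: "\<And>i. i \<in> {1..N} \<Longrightarrow> r i = (\<Sum>j\<in>{1..N}. r j) / real N"
    and T_nonneg: "\<And>l x. l \<in> {1..L} \<Longrightarrow> x \<ge> 0 \<Longrightarrow> T l x \<ge> 0"
begin

lemma T_continuous_on: "l \<in> {1..L} \<Longrightarrow> continuous_on {0..} (T l)"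
  using T_deriv by (auto simp: continuous_on_eq_continuous_within intro: DERIV_continuous)

lemma r_eq: "i \<in> {1..N} \<Longrightarrow> k \<in> {1..N} \<Longrightarrow> r i = r k"
  using r_equal by metis

lemma exists_optimum_with_equal_costs:
  "\<exists>f\<in>feasible N L r. (\<forall>f'\<in>feasible N L r. J_sys N L T f \<le> J_sys N L T f')
     \<and> (\<forall>i\<in>{1..N}. cost N L T i f = J_sys N L T f / N)"
proof -
  let ?R = "\<Sum>j\<in>{1..N}. r j"
  have R: "?R \<ge> 0"
    using r_pos by (intro sum_nonneg) (simp add: less_imp_le)
  obtain x where x: "x \<in> strategies L ?R"
    and min: "\<forall>y\<in>strategies L ?R. link_cost L T x \<le> link_cost L T y"
    using exists_link_cost_minimum[of L ?R T, OF L_pos R T_continuous_on] by blast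
  define f where "f = equal_split N x"
  have feas: "f \<in> feasible N L r"
    unfolding f_def using r_equal by (intro equal_split_feasible[OF _ x]) blast
  have J_f: "J_sys N L T f = link_cost L T x"
    unfolding f_def J_sys_eq_link_cost link_flow_equal_split[OF N_pos] ..
  have opt: "J_sys N L T f \<le> J_sys N L T f'" if "f' \<in> feasible N L r" for f'
    using min link_flow_in_strategies[OF that] unfolding J_f J_sys_eq_link_cost[of N L T f'] by blast
  have "cost N L T i f = J_sys N L T f / N" for i
    unfolding J_f unfolding f_def by (rule cost_equal_split[OF N_pos])
  with feas opt show ?thesis
    by blast
qed

lemma J_sys_opt_le: "f \<in> feasible N L r \<Longrightarrow> J_sys_opt N L T r \<le> J_sys N L T f"
  using exists_optimum_with_equal_costs J_sys_opt_eq_minimum by metis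

lemma J_sys_opt_pos: "J_sys_opt N L T r > 0"
proof -
  obtain f where f: "f \<in> feasible N L r" and "\<forall>f'\<in>feasible N L r. J_sys N L T f \<le> J_sys N L T f'"
    using exists_optimum_with_equal_costs by blast
  then have "J_sys_opt N L T r = link_cost L T (link_flow N f)"
    by (simp add: J_sys_opt_eq_minimum J_sys_eq_link_cost)
  also have "\<dots> > 0"
    using r_pos N_pos T_nonneg T_incr
    by (intro link_cost_pos[OF link_flow_in_strategies[OF f]] sum_pos) auto
  finally show ?thesis .
qed

definition fair_costs :: "nat \<Rightarrow> real" where
  "fair_costs = (\<lambda>i. if i \<in> {1..N} then J_sys_opt N L T r / N else 0)"

lemma fair_costs_optimal_cost_vec:
  "\<exists>f\<in>feasible N L r. fair_costs = cost_vec N L T f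
     \<and> (\<forall>f'\<in>feasible N L r. J_sys N L T f \<le> J_sys N L T f')"
proof -
  obtain f where f: "f \<in> feasible N L r" and opt: "\<forall>f'\<in>feasible N L r. J_sys N L T f \<le> J_sys N L T f'"
    and fair: "\<forall>i\<in>{1..N}. cost N L T i f = J_sys N L T f / N"
    using exists_optimum_with_equal_costs by blast
  have "fair_costs = cost_vec N L T f"
    using fair J_sys_opt_eq_minimum[OF f opt] by (auto simp: fair_costs_def cost_vec_def)
  with f opt show ?thesis
    by blast
qed

lemma fair_costs_in_cost_set: "fair_costs \<in> cost_set N L T r"
  using fair_costs_optimal_cost_vec cost_vec_in_cost_set by metis

lemma sum_fair_costs: "(\<Sum>i\<in>{1..N}. fair_costs i) = J_sys_opt N L T r"
  using N_pos by (simp add: fair_costs_def)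

lemma J_sys_opt_le_sum_cost_set: "g \<in> cost_set N L T r \<Longrightarrow> J_sys_opt N L T r \<le> (\<Sum>i\<in>{1..N}. g i)"
  using J_sys_opt_le by (intro sum_cost_set_ge) auto

context
  fixes fh :: "nat \<Rightarrow> nat \<Rightarrow> real"
  assumes NEP: "is_NEP N L T r fh"
begin

definition equilibrium_cost :: real where
  "equilibrium_cost = cost N L T 1 fh"

lemma NEP_cost_eq_equilibrium_cost: "i \<in> {1..N} \<Longrightarrow> cost N L T i fh = equilibrium_cost"
  unfolding equilibrium_cost_def using N_pos by (intro NEP_cost_eq[OF NEP] r_eq) auto

lemma J_sys_NEP: "J_sys N L T fh = N * equilibrium_cost"
proof -
  have "J_sys N L T fh = (\<Sum>i\<in>{1..N}. equilibrium_cost)"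
    unfolding J_sys_def by (rule sum.cong) (simp_all only: NEP_cost_eq_equilibrium_cost)
  then show ?thesis
    by simp
qed

lemma sum_NEP_gap_le:
  assumes "g \<in> cost_set N L T r"
  shows "(\<Sum>i\<in>{1..N}. cost N L T i fh - g i) \<le> N * equilibrium_cost - J_sys_opt N L T r"
proof -
  have "(\<Sum>i\<in>{1..N}. cost N L T i fh - g i) = N * equilibrium_cost - (\<Sum>i\<in>{1..N}. g i)"
    using J_sys_NEP by (simp add: sum_subtractf J_sys_def)
  also have "\<dots> \<le> N * equilibrium_cost - J_sys_opt N L T r"
    using J_sys_opt_le_sum_cost_set[OF assms] by simp
  finally show ?thesis .
qed

lemma fair_costs_le_NEP_costs:
  assumes "i \<in> {1..N}"
  shows "fair_costs i \<le> cost N L T i fh"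
proof -
  have "J_sys_opt N L T r \<le> N * equilibrium_cost"
    using J_sys_opt_le NEP J_sys_NEP unfolding is_NEP_def by metis
  then show ?thesis
    using assms N_pos by (simp add: fair_costs_def NEP_cost_eq_equilibrium_cost field_simps)
qed

lemma prod_NEP_gap_fair_costs:
  "(\<Prod>i\<in>{1..N}. cost N L T i fh - fair_costs i) = (equilibrium_cost - J_sys_opt N L T r / N) ^ N"
  by (simp add: fair_costs_def NEP_cost_eq_equilibrium_cost)

lemma pareto_symmetric_imp_fair_costs:
  assumes g: "g \<in> cost_set N L T r" and pareto: "pareto_opt N (cost_set N L T r) g"
    and symmetric: "symmetric_N3 N (cost_set N L T r) (\<lambda>i. cost N L T i fh) g"
  shows "g = fair_costs"
proof -
  have one: "1 \<in> {1..N}"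
    using N_pos by simp
  have g_eq: "g i = g 1" if i: "i \<in> {1..N}" for i
    using symmetric[unfolded symmetric_N3_def, rule_format, OF i one]
      NEP_cost_eq_equilibrium_cost[OF i] NEP_cost_eq_equilibrium_cost[OF one]
      swap_coords_cost_set[OF i one r_eq[OF i one]]
    by simp
  have "(\<Sum>i\<in>{1..N}. g i) = (\<Sum>i\<in>{1..N}. g 1)"
    by (rule sum.cong[OF refl g_eq])
  then have "J_sys_opt N L T r \<le> N * g 1"
    using J_sys_opt_le_sum_cost_set[OF g] by simp
  then have fair_le: "fair_costs i \<le> g i" if "i \<in> {1..N}" for i
    using that g_eq[OF that] N_pos by (simp add: fair_costs_def field_simps)
  have "\<not> fair_costs 1 < g 1"
    using pareto fair_costs_in_cost_set fair_le one unfolding pareto_opt_def by blast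
  then have "g 1 = fair_costs 1"
    using fair_le[OF one] by simp
  then have "g i = fair_costs i" if "i \<in> {1..N}" for i
    using that g_eq[OF that] by (simp add: fair_costs_def)
  moreover have "g i = fair_costs i" if "i \<notin> {1..N}" for i
    using cost_set_outside[OF g that] that unfolding fair_costs_def by auto
  ultimately show ?thesis
    by blast
qed

lemma fair_costs_NBS: "is_NBS N (cost_set N L T r) (\<lambda>i. cost N L T i fh) fair_costs"
  unfolding is_NBS_def
proof (intro conjI ballI impI fair_costs_in_cost_set fair_costs_le_NEP_costs)
  fix g assume "g \<in> cost_set N L T r" and le: "\<forall>i\<in>{1..N}. g i \<le> cost N L T i fh"
  have gaps_nonneg: "\<forall>i\<in>{1..N}. cost N L T i fh - g i \<ge> 0"
    using le by simp
  have "(\<Prod>i\<in>{1..N}. cost N L T i fh - g i) \<le> ((\<Sum>i\<in>{1..N}. cost N L T i fh - g i) / N) ^ N"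
    using prod_le_mean_power[of "{1..N}" "\<lambda>i. cost N L T i fh - g i"] gaps_nonneg N_pos by simp
  also have "\<dots> \<le> (equilibrium_cost - J_sys_opt N L T r / N) ^ N"
  proof (rule power_mono)
    show "(\<Sum>i\<in>{1..N}. cost N L T i fh - g i) / N \<le> equilibrium_cost - J_sys_opt N L T r / N"
      using divide_right_mono[OF sum_NEP_gap_le[OF \<open>g \<in> cost_set N L T r\<close>], of N] N_pos
      by (simp add: diff_divide_distrib)
    show "0 \<le> (\<Sum>i\<in>{1..N}. cost N L T i fh - g i) / N"
      using gaps_nonneg by (intro divide_nonneg_nonneg sum_nonneg) auto
  qed
  finally show "(\<Prod>i\<in>{1..N}. cost N L T i fh - g i) \<le> (\<Prod>i\<in>{1..N}. cost N L T i fh - fair_costs i)"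
    unfolding prod_NEP_gap_fair_costs .
qed

lemma NBS_eq_fair_costs:
  assumes NBS: "is_NBS N (cost_set N L T r) (\<lambda>i. cost N L T i fh) gt"
  shows "gt = fair_costs"
proof -
  let ?m = "equilibrium_cost - J_sys_opt N L T r / N"
  have gt: "gt \<in> cost_set N L T r" and le: "\<forall>i\<in>{1..N}. gt i \<le> cost N L T i fh"
    and max: "\<And>g. g \<in> cost_set N L T r \<Longrightarrow> \<forall>i\<in>{1..N}. g i \<le> cost N L T i fh \<Longrightarrow>
      (\<Prod>i\<in>{1..N}. cost N L T i fh - g i) \<le> (\<Prod>i\<in>{1..N}. cost N L T i fh - gt i)"
    using NBS unfolding is_NBS_def by blast+
  have "?m ^ card {1..N} \<le> (\<Prod>i\<in>{1..N}. cost N L T i fh - gt i)"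
    using max[OF fair_costs_in_cost_set ballI[OF fair_costs_le_NEP_costs]]
    unfolding prod_NEP_gap_fair_costs by simp
  moreover have "(\<Sum>i\<in>{1..N}. cost N L T i fh - gt i) \<le> card {1..N} * ?m"
    using sum_NEP_gap_le[OF gt] N_pos by (simp add: right_diff_distrib)
  moreover have "?m \<ge> 0"
    using fair_costs_le_NEP_costs[of 1] NEP_cost_eq_equilibrium_cost[of 1] N_pos
    by (simp add: fair_costs_def)
  ultimately have "\<forall>i\<in>{1..N}. cost N L T i fh - gt i = ?m"
    using le N_pos by (intro all_eq_if_prod_ge_mean_power) auto
  then have "gt i = fair_costs i" if "i \<in> {1..N}" for i
    using that by (simp add: fair_costs_def NEP_cost_eq_equilibrium_cost)
  moreover have "gt i = fair_costs i" if "i \<notin> {1..N}" for i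
    using cost_set_outside[OF gt that] that unfolding fair_costs_def by auto
  ultimately show ?thesis
    by blast
qed

end

end

theorem theorem3p3:
  fixes N L :: nat and T :: "nat \<Rightarrow> real \<Rightarrow> real" and r :: "nat \<Rightarrow> real"
    and fh :: "nat \<Rightarrow> nat \<Rightarrow> real"
  assumes N_pos: "N \<ge> 1" and L_pos: "L \<ge> 1"
    and r_pos: "\<forall>i\<in>{1..N}. r i > 0"
    and r_equal: "\<forall>i\<in>{1..N}. r i = (\<Sum>j\<in>{1..N}. r j) / real N"
    and T_nonneg: "\<forall>l\<in>{1..L}. \<forall>x\<ge>0. T l x \<ge> 0"
    and T_incr: "\<forall>l\<in>{1..L}. strict_mono_on {0..} (T l)"
    and T_convex: "\<forall>l\<in>{1..L}. convex_on {0..} (T l)"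
    and T_C1: "\<forall>l\<in>{1..L}. \<exists>T'. (\<forall>x\<ge>0. (T l has_real_derivative T' x) (at x within {0..}))
                                 \<and> continuous_on {0..} T'"
    and NEP: "is_NEP N L T r fh"
  shows "(\<forall>g1 g2. g1 \<in> cost_set N L T r \<and> g2 \<in> cost_set N L T r
            \<and> pareto_opt N (cost_set N L T r) g1
            \<and> symmetric_N3 N (cost_set N L T r) (\<lambda>i. cost N L T i fh) g1
            \<and> pareto_opt N (cost_set N L T r) g2
            \<and> symmetric_N3 N (cost_set N L T r) (\<lambda>i. cost N L T i fh) g2
            \<longrightarrow> g1 = g2)
       \<and> (\<exists>gt. is_NBS N (cost_set N L T r) (\<lambda>i. cost N L T i fh) gt)
       \<and> (\<forall>gt. is_NBS N (cost_set N L T r) (\<lambda>i. cost N L T i fh) gt \<longrightarrow>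
            (\<Sum>i\<in>{1..N}. gt i) / J_sys_opt N L T r = 1
            \<and> (\<exists>f\<in>feasible N L r. gt = cost_vec N L T f
                 \<and> (\<forall>f'\<in>feasible N L r. J_sys N L T f \<le> J_sys N L T f')))"
proof -
  obtain T' where T': "\<forall>l\<in>{1..L}. \<forall>x\<ge>0. (T l has_real_derivative T' l x) (at x within {0..})"
    using bchoice[OF T_C1] by blast
  interpret equal_demand_game N L T r T'
    by unfold_locales (use N_pos L_pos r_pos r_equal T_nonneg T_incr T_convex T' in blast)+
  have "(\<Sum>i\<in>{1..N}. fair_costs i) / J_sys_opt N L T r = 1"
    using sum_fair_costs J_sys_opt_pos by simp
  with fair_costs_optimal_cost_vec show ?thesis
    using pareto_symmetric_imp_fair_costs[OF NEP] fair_costs_NBS[OF NEP] NBS_eq_fair_costs[OF NEP]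
    by blast
qed

end
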